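(* Let $R_1$ and $R_2$ be finite commutative local principal ideal rings with unity, and let $R=R_1\times R_2$. Suppose $\operatorname{diam}(\Gamma(R_1))\in\{1,2\}$ and $\operatorname{diam}(\Gamma(R_2))=2$. Then $\overline{\Gamma(R)}$ is not a divisor graph.
   Context: For a commutative ring $S$ with unity, $Z(S)$ denotes its set of zero divisors. The zero divisor graph $\Gamma(S)$ is the simple graph with vertex set $Z(S)\setminus\{0\}$, distinct $a,b$ adjacent iff $ab=0$; its complement $\overline{\Gamma(S)}$ has the same vertex set with distinct $a,b$ adjacent iff $ab\neq 0$. The diameter of a graph is the maximum distance (number of edges in a shortest path) between pairs of vertices. A ring is local if it has a unique maximal ideal. For a nonempty set $T$ of positive integers, the divisor graph $G(T)$ has vertex set $T$, with distinct $i,j$ adjacent iff $i\mid j$ or $j\mid i$; a graph is a divisor graph if it is isomorphic to some $G(T)$. *)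

theory Defs
  imports "HOL-Algebra.Algebra" "HOL-Library.Extended_Nat"
begin

definition local_ring :: "('a, 'm) ring_scheme \<Rightarrow> bool" where
  "local_ring R \<longleftrightarrow> (\<exists>!M. maximalideal M R)"

definition principal_ideal_ring :: "('a, 'm) ring_scheme \<Rightarrow> bool" where
  "principal_ideal_ring R \<longleftrightarrow> (\<forall>I. ideal I R \<longrightarrow> principalideal I R)"

definition zero_divisors :: "('a, 'm) ring_scheme \<Rightarrow> 'a set" where
  "zero_divisors R = {a \<in> carrier R. \<exists>b \<in> carrier R. b \<noteq> \<zero>\<^bsub>R\<^esub> \<and> a \<otimes>\<^bsub>R\<^esub> b = \<zero>\<^bsub>R\<^esub>}"

text \<open>Simple graphs given by a vertex set and an adjacency predicate
  (only its values on distinct vertices of the vertex set matter).\<close>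

definition zd_graph_verts :: "('a, 'm) ring_scheme \<Rightarrow> 'a set" where
  "zd_graph_verts R = zero_divisors R - {\<zero>\<^bsub>R\<^esub>}"

definition zd_adj :: "('a, 'm) ring_scheme \<Rightarrow> 'a \<Rightarrow> 'a \<Rightarrow> bool" where
  "zd_adj R a b \<longleftrightarrow> a \<noteq> b \<and> a \<otimes>\<^bsub>R\<^esub> b = \<zero>\<^bsub>R\<^esub>"

definition zd_comp_adj :: "('a, 'm) ring_scheme \<Rightarrow> 'a \<Rightarrow> 'a \<Rightarrow> bool" where
  "zd_comp_adj R a b \<longleftrightarrow> a \<noteq> b \<and> a \<otimes>\<^bsub>R\<^esub> b \<noteq> \<zero>\<^bsub>R\<^esub>"

definition is_walk :: "'v set \<Rightarrow> ('v \<Rightarrow> 'v \<Rightarrow> bool) \<Rightarrow> 'v list \<Rightarrow> bool" where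
  "is_walk V E xs \<longleftrightarrow> xs \<noteq> [] \<and> set xs \<subseteq> V \<and>
     (\<forall>i. Suc i < length xs \<longrightarrow> E (xs ! i) (xs ! Suc i) \<and> xs ! i \<noteq> xs ! Suc i)"

definition graph_dist :: "'v set \<Rightarrow> ('v \<Rightarrow> 'v \<Rightarrow> bool) \<Rightarrow> 'v \<Rightarrow> 'v \<Rightarrow> enat" where
  "graph_dist V E u v = (INF xs \<in> {xs. is_walk V E xs \<and> hd xs = u \<and> last xs = v}.
                          enat (length xs - 1))"

definition graph_diam :: "'v set \<Rightarrow> ('v \<Rightarrow> 'v \<Rightarrow> bool) \<Rightarrow> enat" where
  "graph_diam V E = (SUP u \<in> V. SUP v \<in> V. graph_dist V E u v)"

definition is_divisor_graph :: "'v set \<Rightarrow> ('v \<Rightarrow> 'v \<Rightarrow> bool) \<Rightarrow> bool" where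
  "is_divisor_graph V E \<longleftrightarrow>
     (\<exists>(T :: nat set) f. T \<noteq> {} \<and> (\<forall>t \<in> T. 0 < t) \<and> bij_betw f V T \<and>
        (\<forall>a \<in> V. \<forall>b \<in> V. a \<noteq> b \<longrightarrow> (E a b \<longleftrightarrow> (f a dvd f b \<or> f b dvd f a))))"

end

theory Submission
  imports Defs
begin

text \<open>Both factors have a nonzero zero divisor, and that is all the argument uses. If
  \<open>m n = 0\<close> in \<open>R\<^sub>1\<close> and \<open>x w = 0\<close> in \<open>R\<^sub>2\<close> (all four nonzero), the seven vertices
  \<open>(1, x), (1, 0), (m, 1), (m, x), (n, 0), (0, 1), (0, w)\<close> induce in the complement of
  \<open>\<Gamma>(R\<^sub>1 \<times> R\<^sub>2)\<close> a graph that is not the comparability graph of any transitive relation.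
  A divisor graph is the comparability graph of divisibility on its labels, so it cannot
  contain this induced subgraph.\<close>

definition comparable :: "('a \<Rightarrow> 'a \<Rightarrow> bool) \<Rightarrow> 'a \<Rightarrow> 'a \<Rightarrow> bool" where
  "comparable r a b \<longleftrightarrow> r a b \<or> r b a"

lemma comparable_conversep [simp]: "comparable r\<inverse>\<inverse> = comparable r"
  by (auto simp: comparable_def fun_eq_iff)

lemma comparability_obstruction:
  assumes "transp r"
    and c01: "comparable r a0 a1" and c02: "comparable r a0 a2" and c03: "comparable r a0 a3"
    and c04: "comparable r a0 a4" and c05: "comparable r a0 a5"
    and c12: "comparable r a1 a2" and c13: "comparable r a1 a3" and c14: "comparable r a1 a4"
    and c23: "comparable r a2 a3" and c25: "comparable r a2 a5" and c26: "comparable r a2 a6"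
    and c35: "comparable r a3 a5" and c56: "comparable r a5 a6"
    and n06: "\<not> comparable r a0 a6" and n15: "\<not> comparable r a1 a5"
    and n16: "\<not> comparable r a1 a6" and n24: "\<not> comparable r a2 a4"
    and n34: "\<not> comparable r a3 a4" and n36: "\<not> comparable r a3 a6"
    and n45: "\<not> comparable r a4 a5" and n46: "\<not> comparable r a4 a6"
  shows False
proof -
  \<comment> \<open>Orienting the edge \<open>a0 a4\<close> forces all further orientations, ending in \<open>s a1 a5\<close>.\<close>
  have oriented: False if "transp s" "comparable s = comparable r" "s a0 a4" for s
  proof -
    note trans = transpD[OF \<open>transp s\<close>]
    have c: "s a b \<or> s b a" if "comparable r a b" for a b
      using that \<open>comparable s = comparable r\<close> by (metis comparable_def)
    have n: "\<not> s a b" "\<not> s b a" if "\<not> comparable r a b" for a b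
      using that \<open>comparable s = comparable r\<close> by (metis comparable_def)+
    have "s a0 a2" using c[OF c02] n[OF n24] trans \<open>s a0 a4\<close> by blast
    then have "s a6 a2" using c[OF c26] n[OF n06] trans by blast
    then have "s a1 a2" using c[OF c12] n[OF n16] trans by blast
    then have "s a1 a4" using c[OF c14] n[OF n24] trans by blast
    then have "s a1 a3" using c[OF c13] n[OF n34] trans by blast
    have "s a0 a5" using c[OF c05] n[OF n45] trans \<open>s a0 a4\<close> by blast
    then have "s a6 a5" using c[OF c56] n[OF n06] trans by blast
    then have "s a3 a5" using c[OF c35] n[OF n36] trans by blast
    then show False using \<open>s a1 a3\<close> n[OF n15] trans by blast
  qed
  have "transp r\<inverse>\<inverse>"
    using \<open>transp r\<close> by (simp add: transp_def)
  from c04 consider "r a0 a4" | "r\<inverse>\<inverse> a0 a4"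
    unfolding comparable_def by auto
  then show False
  proof cases
    case 1
    show False by (rule oriented[OF \<open>transp r\<close> refl 1])
  next
    case 2
    show False by (rule oriented[OF \<open>transp r\<inverse>\<inverse>\<close> comparable_conversep 2])
  qed
qed

lemma transp_dvd: "transp ((dvd) :: 'a::comm_monoid_mult \<Rightarrow> _)"
  by (rule transpI) (rule dvd_trans)

lemma divisor_graph_comparability:
  assumes "is_divisor_graph V E"
  obtains f :: "'v \<Rightarrow> nat"
  where "\<And>a b. a \<in> V \<Longrightarrow> b \<in> V \<Longrightarrow> a \<noteq> b \<Longrightarrow> E a b \<longleftrightarrow> comparable (dvd) (f a) (f b)"
  using assms unfolding is_divisor_graph_def comparable_def by blast

lemma RDirProd_mult [simp]:
  "(a, b) \<otimes>\<^bsub>RDirProd R S\<^esub> (c, d) = (a \<otimes>\<^bsub>R\<^esub> c, b \<otimes>\<^bsub>S\<^esub> d)"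
  by (simp add: RDirProd_def DirProd_def monoid.defs)

lemma RDirProd_zero [simp]: "\<zero>\<^bsub>RDirProd R S\<^esub> = (\<zero>\<^bsub>R\<^esub>, \<zero>\<^bsub>S\<^esub>)"
  by (simp add: RDirProd_def DirProd_def monoid.defs)

lemma zd_graph_verts_RDirProdI:
  assumes "a \<in> carrier R" "b \<in> carrier S" "(a, b) \<noteq> (\<zero>\<^bsub>R\<^esub>, \<zero>\<^bsub>S\<^esub>)"
    and "c \<in> carrier R" "d \<in> carrier S" "(c, d) \<noteq> (\<zero>\<^bsub>R\<^esub>, \<zero>\<^bsub>S\<^esub>)"
    and "a \<otimes>\<^bsub>R\<^esub> c = \<zero>\<^bsub>R\<^esub>" "b \<otimes>\<^bsub>S\<^esub> d = \<zero>\<^bsub>S\<^esub>"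
  shows "(a, b) \<in> zd_graph_verts (RDirProd R S)"
  using assms unfolding zd_graph_verts_def zero_divisors_def by (auto simp: RDirProd_carrier)

lemma zd_comp_adj_RDirProd_iff:
  "zd_comp_adj (RDirProd R S) (a, b) (c, d) \<longleftrightarrow>
     (a, b) \<noteq> (c, d) \<and> (a \<otimes>\<^bsub>R\<^esub> c \<noteq> \<zero>\<^bsub>R\<^esub> \<or> b \<otimes>\<^bsub>S\<^esub> d \<noteq> \<zero>\<^bsub>S\<^esub>)"
  by (auto simp: zd_comp_adj_def)

lemma vertices_nonempty_if_graph_diam_nonzero:
  assumes "graph_diam V E \<noteq> 0"
  shows "V \<noteq> {}"
  using assms unfolding graph_diam_def by (auto simp: bot_enat_def)

lemma (in cring) zero_divisor_pairE:
  assumes "zd_graph_verts R \<noteq> {}"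
  obtains a b where "a \<in> carrier R" "b \<in> carrier R" "a \<noteq> \<zero>" "b \<noteq> \<zero>"
    "a \<otimes> b = \<zero>" "b \<otimes> a = \<zero>" "a \<noteq> \<one>" "b \<noteq> \<one>" "\<one> \<noteq> \<zero>"
proof -
  obtain a b where ab: "a \<in> carrier R" "b \<in> carrier R" "a \<noteq> \<zero>" "b \<noteq> \<zero>" "a \<otimes> b = \<zero>"
    using assms unfolding zd_graph_verts_def zero_divisors_def by auto
  moreover have "b \<otimes> a = \<zero>" using ab by (simp add: m_comm)
  moreover have "a \<noteq> \<one>" "b \<noteq> \<one>" using ab by auto
  moreover have "\<one> \<noteq> \<zero>" using ab one_zeroD by blast
  ultimately show ?thesis using that by blast
qed

lemma RDirProd_zd_complement_not_divisor_graph: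
  assumes "cring R" and "cring S"
    and "zd_graph_verts R \<noteq> {}" and "zd_graph_verts S \<noteq> {}"
  shows "\<not> is_divisor_graph (zd_graph_verts (RDirProd R S)) (zd_comp_adj (RDirProd R S))"
proof
  interpret R: cring R by fact
  interpret S: cring S by fact
  obtain m n where m: "m \<in> carrier R" "n \<in> carrier R" "m \<noteq> \<zero>\<^bsub>R\<^esub>" "n \<noteq> \<zero>\<^bsub>R\<^esub>"
      "m \<otimes>\<^bsub>R\<^esub> n = \<zero>\<^bsub>R\<^esub>" "n \<otimes>\<^bsub>R\<^esub> m = \<zero>\<^bsub>R\<^esub>"
      "m \<noteq> \<one>\<^bsub>R\<^esub>" "n \<noteq> \<one>\<^bsub>R\<^esub>" "\<one>\<^bsub>R\<^esub> \<noteq> \<zero>\<^bsub>R\<^esub>"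
    using R.zero_divisor_pairE \<open>zd_graph_verts R \<noteq> {}\<close> .
  obtain x w where x: "x \<in> carrier S" "w \<in> carrier S" "x \<noteq> \<zero>\<^bsub>S\<^esub>" "w \<noteq> \<zero>\<^bsub>S\<^esub>"
      "x \<otimes>\<^bsub>S\<^esub> w = \<zero>\<^bsub>S\<^esub>" "w \<otimes>\<^bsub>S\<^esub> x = \<zero>\<^bsub>S\<^esub>"
      "x \<noteq> \<one>\<^bsub>S\<^esub>" "w \<noteq> \<one>\<^bsub>S\<^esub>" "\<one>\<^bsub>S\<^esub> \<noteq> \<zero>\<^bsub>S\<^esub>"
    using S.zero_divisor_pairE \<open>zd_graph_verts S \<noteq> {}\<close> .
  let ?V = "zd_graph_verts (RDirProd R S)"
  have v0: "(\<one>\<^bsub>R\<^esub>, x) \<in> ?V"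
    by (rule zd_graph_verts_RDirProdI[where c = "\<zero>\<^bsub>R\<^esub>" and d = "w"]) (simp_all add: m x)
  have v1: "(\<one>\<^bsub>R\<^esub>, \<zero>\<^bsub>S\<^esub>) \<in> ?V"
    by (rule zd_graph_verts_RDirProdI[where c = "\<zero>\<^bsub>R\<^esub>" and d = "\<one>\<^bsub>S\<^esub>"]) (simp_all add: m x)
  have v2: "(m, \<one>\<^bsub>S\<^esub>) \<in> ?V"
    by (rule zd_graph_verts_RDirProdI[where c = "n" and d = "\<zero>\<^bsub>S\<^esub>"]) (simp_all add: m x)
  have v3: "(m, x) \<in> ?V"
    by (rule zd_graph_verts_RDirProdI[where c = "n" and d = "w"]) (simp_all add: m x)
  have v4: "(n, \<zero>\<^bsub>S\<^esub>) \<in> ?V"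
    by (rule zd_graph_verts_RDirProdI[where c = "m" and d = "\<zero>\<^bsub>S\<^esub>"]) (simp_all add: m x)
  have v5: "(\<zero>\<^bsub>R\<^esub>, \<one>\<^bsub>S\<^esub>) \<in> ?V"
    by (rule zd_graph_verts_RDirProdI[where c = "\<one>\<^bsub>R\<^esub>" and d = "\<zero>\<^bsub>S\<^esub>"]) (simp_all add: m x)
  have v6: "(\<zero>\<^bsub>R\<^esub>, w) \<in> ?V"
    by (rule zd_graph_verts_RDirProdI[where c = "\<one>\<^bsub>R\<^esub>" and d = "\<zero>\<^bsub>S\<^esub>"]) (simp_all add: m x)
  assume "is_divisor_graph ?V (zd_comp_adj (RDirProd R S))"
  then obtain f :: "_ \<Rightarrow> nat" where f: "\<And>p q. p \<in> ?V \<Longrightarrow> q \<in> ?V \<Longrightarrow> p \<noteq> q \<Longrightarrow>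
      zd_comp_adj (RDirProd R S) p q \<longleftrightarrow> comparable (dvd) (f p) (f q)"
    by (rule divisor_graph_comparability) blast
  have adj: "comparable (dvd) (f (a, b)) (f (c, d)) \<longleftrightarrow>
      a \<otimes>\<^bsub>R\<^esub> c \<noteq> \<zero>\<^bsub>R\<^esub> \<or> b \<otimes>\<^bsub>S\<^esub> d \<noteq> \<zero>\<^bsub>S\<^esub>"
    if "(a, b) \<in> ?V" "(c, d) \<in> ?V" "(a, b) \<noteq> (c, d)" for a b c d
    using f[OF that] that(3) by (simp add: zd_comp_adj_RDirProd_iff)
  show False
    by (rule comparability_obstruction[OF transp_dvd,
          of "f (\<one>\<^bsub>R\<^esub>, x)" "f (\<one>\<^bsub>R\<^esub>, \<zero>\<^bsub>S\<^esub>)" "f (m, \<one>\<^bsub>S\<^esub>)" "f (m, x)"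
             "f (n, \<zero>\<^bsub>S\<^esub>)" "f (\<zero>\<^bsub>R\<^esub>, \<one>\<^bsub>S\<^esub>)" "f (\<zero>\<^bsub>R\<^esub>, w)"];
        subst adj; simp add: v0 v1 v2 v3 v4 v5 v6 m x m(3,4,7-9)[THEN not_sym] x(3,4,7-9)[THEN not_sym])
qed

theorem theorem2p6:
  fixes R1 :: "('a, 'm) ring_scheme" and R2 :: "('b, 'n) ring_scheme"
  assumes "cring R1" and "cring R2"
    and "finite (carrier R1)" and "finite (carrier R2)"
    and "local_ring R1" and "local_ring R2"
    and "principal_ideal_ring R1" and "principal_ideal_ring R2"
    and "graph_diam (zd_graph_verts R1) (zd_adj R1) \<in> {1, 2}"
    and "graph_diam (zd_graph_verts R2) (zd_adj R2) = 2"
  shows "\<not> is_divisor_graph (zd_graph_verts (RDirProd R1 R2)) (zd_comp_adj (RDirProd R1 R2))"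
proof (rule RDirProd_zd_complement_not_divisor_graph[OF assms(1,2)])
  have "graph_diam (zd_graph_verts R1) (zd_adj R1) \<noteq> 0"
    using assms(9) by auto
  then show "zd_graph_verts R1 \<noteq> {}"
    by (rule vertices_nonempty_if_graph_diam_nonzero)
  have "graph_diam (zd_graph_verts R2) (zd_adj R2) \<noteq> 0"
    using assms(10) by auto
  then show "zd_graph_verts R2 \<noteq> {}"
    by (rule vertices_nonempty_if_graph_diam_nonzero)
qed

end
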